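(* Let $B$ be a unital $C^*$-algebra with a $*$-isomorphism $\psi:B\to M_n\otimes B$ satisfying $\psi(1)=I_n\otimes1$, and suppose that $A$ is a maximal abelian $*$-subalgebra of $B$ with $\sigma_1(A)\subset A$. Then $\psi_m(A)\subset M_n^{\otimes m}\otimes A$ for all $m\ge0$.
   Context: $M_n=M_n(\mathbb{C})$, identity $I_n$. Define $\psi_0=\mathrm{id}_B$, $\psi_{m+1}=(\mathrm{id}^{\otimes m}\otimes\psi)\circ\psi_m:B\to M_n^{\otimes(m+1)}\otimes B$. With $f(b)=I_n\otimes b$, $\sigma_1=\psi^{-1}\circ f:B\to B$. *)

theory Defs
  imports "HOL-Analysis.Analysis"
begin

class cstar_algebra = banach + real_normed_algebra_1 +
  fixes scaleC :: "complex \<Rightarrow> 'a \<Rightarrow> 'a"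
    and cstar :: "'a \<Rightarrow> 'a"
  assumes scaleC_add_right: "scaleC c (x + y) = scaleC c x + scaleC c y"
    and scaleC_add_left: "scaleC (c + d) x = scaleC c x + scaleC d x"
    and scaleC_scaleC: "scaleC c (scaleC d x) = scaleC (c * d) x"
    and scaleC_one: "scaleC 1 x = x"
    and scaleR_scaleC: "scaleR r x = scaleC (complex_of_real r) x"
    and scaleC_mult_left: "scaleC c x * y = scaleC c (x * y)"
    and scaleC_mult_right: "x * scaleC c y = scaleC c (x * y)"
    and norm_scaleC: "norm (scaleC c x) = cmod c * norm x"
    and cstar_cstar: "cstar (cstar x) = x"
    and cstar_add: "cstar (x + y) = cstar x + cstar y"
    and cstar_scaleC: "cstar (scaleC c x) = scaleC (cnj c) (cstar x)"
    and cstar_mult: "cstar (x * y) = cstar y * cstar x"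
    and cstar_identity: "norm (cstar x * x) = (norm x)\<^sup>2"

text \<open>Elements of \<open>M_n \<otimes> B = M_n(B)\<close> are represented as functions
  \<open>nat \<Rightarrow> nat \<Rightarrow> 'b\<close> vanishing outside \<open>{0..<n} \<times> {0..<n}\<close>.\<close>

definition mat_carrier :: "nat \<Rightarrow> (nat \<Rightarrow> nat \<Rightarrow> 'b::zero) set" where
  "mat_carrier n = {X. \<forall>i j. (n \<le> i \<or> n \<le> j) \<longrightarrow> X i j = 0}"

definition mat_mult :: "nat \<Rightarrow> (nat \<Rightarrow> nat \<Rightarrow> 'b::semiring_0) \<Rightarrow> (nat \<Rightarrow> nat \<Rightarrow> 'b) \<Rightarrow> nat \<Rightarrow> nat \<Rightarrow> 'b" where
  "mat_mult n X Y = (\<lambda>i j. if i < n \<and> j < n then (\<Sum>k<n. X i k * Y k j) else 0)"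

definition mat_star :: "nat \<Rightarrow> (nat \<Rightarrow> nat \<Rightarrow> 'b::cstar_algebra) \<Rightarrow> nat \<Rightarrow> nat \<Rightarrow> 'b" where
  "mat_star n X = (\<lambda>i j. if i < n \<and> j < n then cstar (X j i) else 0)"

definition mat_scaleC :: "complex \<Rightarrow> (nat \<Rightarrow> nat \<Rightarrow> 'b::cstar_algebra) \<Rightarrow> nat \<Rightarrow> nat \<Rightarrow> 'b" where
  "mat_scaleC c X = (\<lambda>i j. scaleC c (X i j))"

text \<open>\<open>f(b) = I_n \<otimes> b\<close>; in particular \<open>I_n \<otimes> 1 = diag_mat n 1\<close>.\<close>
definition diag_mat :: "nat \<Rightarrow> 'b::zero \<Rightarrow> nat \<Rightarrow> nat \<Rightarrow> 'b" where
  "diag_mat n b = (\<lambda>i j. if i < n \<and> j < n \<and> i = j then b else 0)"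

definition star_iso_to_mat :: "nat \<Rightarrow> ('b::cstar_algebra \<Rightarrow> nat \<Rightarrow> nat \<Rightarrow> 'b) \<Rightarrow> bool" where
  "star_iso_to_mat n \<psi> \<longleftrightarrow>
     bij_betw \<psi> UNIV (mat_carrier n) \<and>
     (\<forall>x y. \<psi> (x + y) = (\<lambda>i j. \<psi> x i j + \<psi> y i j)) \<and>
     (\<forall>c x. \<psi> (scaleC c x) = mat_scaleC c (\<psi> x)) \<and>
     (\<forall>x y. \<psi> (x * y) = mat_mult n (\<psi> x) (\<psi> y)) \<and>
     (\<forall>x. \<psi> (cstar x) = mat_star n (\<psi> x))"

text \<open>Elements of \<open>M_n^{\<otimes>m} \<otimes> B\<close> are matrices indexed by multi-indices
  (lists of length m with entries < n).  \<open>\<psi>_0 = id\<close>,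
  \<open>\<psi>_{m+1} = (id^{\<otimes>m} \<otimes> \<psi>) \<circ> \<psi>_m\<close>: \<psi> is applied to each entry of \<open>\<psi>_m(b)\<close>
  and the new tensor index is appended as the last one.\<close>
fun psi_iter :: "('b \<Rightarrow> nat \<Rightarrow> nat \<Rightarrow> 'b) \<Rightarrow> nat \<Rightarrow> 'b \<Rightarrow> nat list \<Rightarrow> nat list \<Rightarrow> 'b::zero" where
  "psi_iter \<psi> 0 b = (\<lambda>I J. if I = [] \<and> J = [] then b else 0)"
| "psi_iter \<psi> (Suc m) b = (\<lambda>I J.
     if I \<noteq> [] \<and> J \<noteq> [] then \<psi> (psi_iter \<psi> m b (butlast I) (butlast J)) (last I) (last J)
     else 0)"

definition multi_index :: "nat \<Rightarrow> nat \<Rightarrow> nat list set" where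
  "multi_index n m = {I. length I = m \<and> (\<forall>k\<in>set I. k < n)}"

definition star_subalgebra :: "'b::cstar_algebra set \<Rightarrow> bool" where
  "star_subalgebra A \<longleftrightarrow> 0 \<in> A \<and> (\<forall>x\<in>A. \<forall>y\<in>A. x + y \<in> A \<and> x * y \<in> A) \<and>
     (\<forall>c. \<forall>x\<in>A. scaleC c x \<in> A) \<and> (\<forall>x\<in>A. cstar x \<in> A)"

definition abelian :: "'b::times set \<Rightarrow> bool" where
  "abelian A \<longleftrightarrow> (\<forall>x\<in>A. \<forall>y\<in>A. x * y = y * x)"

definition maximal_abelian_star_subalgebra :: "'b::cstar_algebra set \<Rightarrow> bool" where
  "maximal_abelian_star_subalgebra A \<longleftrightarrow> star_subalgebra A \<and> abelian A \<and>
     (\<forall>C. star_subalgebra C \<and> abelian C \<and> A \<subseteq> C \<longrightarrow> C = A)"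

end

theory Submission
  imports Defs
begin

text \<open>A maximal abelian *-subalgebra \<open>A\<close> is its own relative commutant: an
  element commuting with \<open>A\<close> has self-adjoint real and imaginary parts that
  commute with \<open>A\<close>, and adjoining a self-adjoint element commuting with \<open>A\<close>
  generates an abelian *-subalgebra, which by maximality is \<open>A\<close> itself.
  For \<open>a, b \<in> A\<close> the invariance \<open>\<sigma>\<^sub>1(A) \<subseteq> A\<close> gives \<open>\<psi>(a) \<psi>(\<sigma>\<^sub>1 b) = \<psi>(\<sigma>\<^sub>1 b) \<psi>(a)\<close>
  with \<open>\<psi>(\<sigma>\<^sub>1 b) = I\<^sub>n \<otimes> b\<close>, so every entry of \<open>\<psi>(a)\<close> commutes with \<open>A\<close> and
  lies in \<open>A\<close>; induction on \<open>m\<close> finishes the proof.\<close>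

inductive_set star_generated :: "'b::cstar_algebra set \<Rightarrow> 'b set" for S where
  base: "x \<in> S \<Longrightarrow> x \<in> star_generated S"
| zero: "0 \<in> star_generated S"
| add: "x \<in> star_generated S \<Longrightarrow> y \<in> star_generated S \<Longrightarrow> x + y \<in> star_generated S"
| mult: "x \<in> star_generated S \<Longrightarrow> y \<in> star_generated S \<Longrightarrow> x * y \<in> star_generated S"
| scaleC: "x \<in> star_generated S \<Longrightarrow> scaleC c x \<in> star_generated S"
| cstar: "x \<in> star_generated S \<Longrightarrow> cstar x \<in> star_generated S"

lemma star_subalgebra_star_generated: "star_subalgebra (star_generated S)"
  unfolding star_subalgebra_def by (auto intro: star_generated.intros)

lemma cstar_commute:
  fixes x a :: "'b::cstar_algebra"
  assumes "x * cstar a = cstar a * x"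
  shows "cstar x * a = a * cstar x"
proof -
  have "cstar x * a = cstar (cstar a * x)" by (simp add: cstar_mult cstar_cstar)
  also have "\<dots> = cstar (x * cstar a)" using assms by simp
  also have "\<dots> = a * cstar x" by (simp add: cstar_mult cstar_cstar)
  finally show ?thesis .
qed

lemma star_generated_commute:
  fixes T :: "'b::cstar_algebra set"
  assumes T_cstar: "\<forall>t\<in>T. cstar t \<in> T"
    and S_commute: "\<forall>s\<in>S. \<forall>t\<in>T. s * t = t * s"
    and "x \<in> star_generated S"
  shows "\<forall>t\<in>T. x * t = t * x"
  using \<open>x \<in> star_generated S\<close>
proof (induction rule: star_generated.induct)
  case (base x)
  then show ?case using S_commute by blast
next
  case zero
  then show ?case by simp
next
  case (add x y)
  then show ?case by (simp add: distrib_left distrib_right)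
next
  case (mult x y)
  then show ?case by (metis mult.assoc)
next
  case (scaleC x c)
  then show ?case by (simp add: scaleC_mult_left scaleC_mult_right)
next
  case (cstar x)
  show ?case
  proof
    fix t assume "t \<in> T"
    then have "x * cstar t = cstar t * x" using cstar.IH T_cstar by blast
    then show "cstar x * t = t * cstar x" by (rule cstar_commute)
  qed
qed

lemma abelian_star_generated:
  fixes S :: "'b::cstar_algebra set"
  assumes S_cstar: "\<forall>s\<in>S. cstar s \<in> S"
    and S_commute: "\<forall>s\<in>S. \<forall>t\<in>S. s * t = t * s"
  shows "abelian (star_generated S)"
proof -
  have "\<forall>s\<in>S. \<forall>t\<in>star_generated S. s * t = t * s"
    using star_generated_commute[OF S_cstar S_commute] by auto
  moreover have "\<forall>t\<in>star_generated S. cstar t \<in> star_generated S"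
    by (auto intro: star_generated.cstar)
  ultimately show ?thesis
    unfolding abelian_def using star_generated_commute by blast
qed

lemma masa_selfadjoint_commutant:
  fixes A :: "'b::cstar_algebra set"
  assumes masa: "maximal_abelian_star_subalgebra A"
    and h_commute: "\<forall>a\<in>A. h * a = a * h"
    and h_selfadjoint: "cstar h = h"
  shows "h \<in> A"
proof -
  have A: "star_subalgebra A" "abelian A"
    using masa unfolding maximal_abelian_star_subalgebra_def by auto
  have "\<forall>s\<in>insert h A. cstar s \<in> insert h A"
    using A(1) h_selfadjoint unfolding star_subalgebra_def by auto
  moreover have "\<forall>s\<in>insert h A. \<forall>t\<in>insert h A. s * t = t * s"
    using A(2) h_commute unfolding abelian_def by auto
  ultimately have "abelian (star_generated (insert h A))"
    by (rule abelian_star_generated)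
  moreover have "A \<subseteq> star_generated (insert h A)"
    by (auto intro: star_generated.base)
  ultimately have "star_generated (insert h A) = A"
    using masa star_subalgebra_star_generated
    unfolding maximal_abelian_star_subalgebra_def by blast
  then show ?thesis by (auto intro: star_generated.base)
qed

lemma scaleC_minus_one: "scaleC (-1) (x::'b::cstar_algebra) = - x"
  by (metis scaleR_scaleC scaleR_minus1_left of_real_1 of_real_minus)

lemma scaleC_minus_left: "scaleC (- c) (x::'b::cstar_algebra) = - scaleC c x"
  by (metis scaleC_minus_one scaleC_scaleC mult_minus1)

lemma scaleC_minus_right: "scaleC c (- (x::'b::cstar_algebra)) = - scaleC c x"
  by (metis scaleC_minus_one scaleC_scaleC mult.commute)

lemma scaleC_diff_right: "scaleC c ((x::'b::cstar_algebra) - y) = scaleC c x - scaleC c y"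
  by (metis scaleC_add_right scaleC_minus_right diff_conv_add_uminus)

lemma cstar_diff: "cstar ((x::'b::cstar_algebra) - y) = cstar x - cstar y"
  by (metis cstar_add cstar_scaleC scaleC_minus_one complex_cnj_minus complex_cnj_one
      diff_conv_add_uminus)

lemma masa_commutant:
  fixes A :: "'b::cstar_algebra set"
  assumes masa: "maximal_abelian_star_subalgebra A"
    and x_commute: "\<forall>a\<in>A. x * a = a * x"
  shows "x \<in> A"
proof -
  have A: "star_subalgebra A"
    using masa unfolding maximal_abelian_star_subalgebra_def by auto
  have x_cstar_commute: "\<forall>a\<in>A. cstar x * a = a * cstar x"
  proof
    fix a assume "a \<in> A"
    then have "cstar a \<in> A" using A unfolding star_subalgebra_def by blast
    then show "cstar x * a = a * cstar x" using x_commute cstar_commute by blast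
  qed
  define re where "re = x + cstar x"
  define im where "im = scaleC \<i> (cstar x - x)"
  have "re \<in> A"
    using masa_selfadjoint_commutant[OF masa] x_commute x_cstar_commute unfolding re_def
    by (simp add: distrib_left distrib_right cstar_add cstar_cstar add.commute)
  have "im \<in> A"
  proof (rule masa_selfadjoint_commutant[OF masa])
    show "\<forall>a\<in>A. im * a = a * im"
      using x_commute x_cstar_commute unfolding im_def
      by (simp add: left_diff_distrib right_diff_distrib scaleC_mult_left scaleC_mult_right)
    show "cstar im = im"
      unfolding im_def
      by (simp add: cstar_scaleC cstar_diff cstar_cstar scaleC_diff_right scaleC_minus_left)
  qed
  have "re + scaleC \<i> im = x + x"
    unfolding re_def im_def by (simp add: scaleC_scaleC scaleC_diff_right scaleC_minus_left scaleC_one)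
  also have "\<dots> = scaleC 2 x"
    by (metis one_add_one scaleC_add_left scaleC_one)
  finally have "x = scaleC (1/2) (re + scaleC \<i> im)"
    by (simp add: scaleC_scaleC scaleC_one)
  moreover have "scaleC (1/2) (re + scaleC \<i> im) \<in> A"
    using A \<open>re \<in> A\<close> \<open>im \<in> A\<close> unfolding star_subalgebra_def by blast
  ultimately show ?thesis by simp
qed

lemma mat_mult_diag_mat_right:
  assumes "i < n" "j < n"
  shows "mat_mult n X (diag_mat n b) i j = X i j * b"
  using assms unfolding mat_mult_def diag_mat_def
  by (simp add: if_distrib[of "\<lambda>t. _ * t"] cong: if_cong)

lemma mat_mult_diag_mat_left:
  assumes "i < n" "j < n"
  shows "mat_mult n (diag_mat n b) X i j = b * X i j"
  using assms unfolding mat_mult_def diag_mat_def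
  by (simp add: if_distrib[of "\<lambda>t. t * _"] cong: if_cong)

lemma star_iso_entries_in_masa:
  fixes \<psi> :: "'b::cstar_algebra \<Rightarrow> nat \<Rightarrow> nat \<Rightarrow> 'b"
  assumes iso: "star_iso_to_mat n \<psi>"
    and masa: "maximal_abelian_star_subalgebra A"
    and invariant: "(inv \<psi> \<circ> diag_mat n) ` A \<subseteq> A"
    and "a \<in> A"
  shows "\<psi> a i j \<in> A"
proof (cases "i < n \<and> j < n")
  case False
  have "\<psi> a \<in> mat_carrier n"
    using iso unfolding star_iso_to_mat_def bij_betw_def by auto
  then have "\<psi> a i j = 0" using False unfolding mat_carrier_def by auto
  then show ?thesis
    using masa unfolding maximal_abelian_star_subalgebra_def star_subalgebra_def by simp
next
  case True
  show ?thesis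
  proof (rule masa_commutant[OF masa], intro ballI)
    fix b assume "b \<in> A"
    define s where "s = inv \<psi> (diag_mat n b)"
    have "s \<in> A" using invariant \<open>b \<in> A\<close> unfolding s_def by auto
    have "diag_mat n b \<in> mat_carrier n" unfolding mat_carrier_def diag_mat_def by auto
    then have \<psi>_s: "\<psi> s = diag_mat n b"
      using iso unfolding s_def star_iso_to_mat_def by (metis bij_betw_imp_surj_on f_inv_into_f)
    have "a * s = s * a"
      using masa \<open>a \<in> A\<close> \<open>s \<in> A\<close> unfolding maximal_abelian_star_subalgebra_def abelian_def by auto
    then have "mat_mult n (\<psi> a) (diag_mat n b) = mat_mult n (diag_mat n b) (\<psi> a)"
      using iso \<psi>_s unfolding star_iso_to_mat_def by metis
    then show "\<psi> a i j * b = b * \<psi> a i j"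
      using True by (metis mat_mult_diag_mat_right mat_mult_diag_mat_left)
  qed
qed

lemma psi_iter_closed:
  assumes "0 \<in> A" and "\<And>a i j. a \<in> A \<Longrightarrow> \<psi> a i j \<in> A" and "a \<in> A"
  shows "psi_iter \<psi> m a I J \<in> A"
  using assms by (induction m arbitrary: I J) simp_all

theorem proposition3p4:
  fixes n :: nat
    and \<psi> :: "'b::cstar_algebra \<Rightarrow> nat \<Rightarrow> nat \<Rightarrow> 'b"
    and A :: "'b set"
  assumes "star_iso_to_mat n \<psi>"
    and "\<psi> 1 = diag_mat n 1"
    and "maximal_abelian_star_subalgebra A"
    and "(inv \<psi> \<circ> diag_mat n) ` A \<subseteq> A"
  shows "\<forall>m. \<forall>a\<in>A. \<forall>I\<in>multi_index n m. \<forall>J\<in>multi_index n m. psi_iter \<psi> m a I J \<in> A"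
proof (intro allI ballI)
  fix m a I J assume "a \<in> A"
  have "0 \<in> A"
    using assms(3) unfolding maximal_abelian_star_subalgebra_def star_subalgebra_def by simp
  then show "psi_iter \<psi> m a I J \<in> A"
    using psi_iter_closed star_iso_entries_in_masa[OF assms(1,3,4)] \<open>a \<in> A\<close> by metis
qed

end
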